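(* Fix $k\ge1$. For every $k$-bounded partition $\lambda$, the image of the dual $k$-Schur function $\mathfrak{S}^{(k)}_\lambda$ in $\mathsf{QSym}^{(k)}$ satisfies $$\mathfrak{S}^{(k)}_\lambda=\sum_{\substack{\alpha\ k\text{-bounded}\\ \lambda(\alpha)=\lambda}}\mathcal{S}^{(k)}_\alpha .$$
   Context: Compositions are finite sequences of positive integers (possibly empty $\emptyset$); $k$-bounded means all parts $\le k$; $\lambda(\alpha)$ is the partition obtained by sorting the parts of $\alpha$. $\mathsf{Sym}^{(k)}$ is the quotient of the ring of symmetric functions $\mathsf{Sym}$ by the ideal generated by the monomial symmetric functions $m_\mu$ with $\mu$ not $k$-bounded; $\mathsf{Sym}_{(k)}=\mathbb{Q}[h_1,\dots,h_k]$; they are paired by $\langle m_\lambda,h_\mu\rangle=\delta_{\lambda,\mu}$ ($\lambda,\mu$ $k$-bounded). $\mathsf{QSym}^{(k)}$ is the quotient of $\mathsf{QSym}$ by the ideal generated by monomial quasi-symmetric functions $M_\alpha$ with some part $>k$; $\mathsf{NSym}_{(k)}$ is the subalgebra of $\mathbb{Q}\langle H_1,H_2,\dots\rangle$ generated by $H_1,\dots,H_k$; they are paired by $\langle M_\alpha,H_\beta\rangle=\delta_{\alpha,\beta}$. The inclusion $\mathsf{Sym}\subset\mathsf{QSym}$ ($m_\mu=\sum_{\lambda(\alpha)=\mu}M_\alpha$) induces a map $\mathsf{Sym}^{(k)}\to\mathsf{QSym}^{(k)}$. $k$-conjugation: hook length of cell $(i,j)$ of $\kappa$ is $\kappa_i-j+\kappa'_j-i+1$;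 a $(k+1)$-core has no cell of hook length $k+1$; $p(\kappa)$ has $i$-th part the number of cells in row $i$ with hook length $\le k$; $p$ is a bijection from $(k+1)$-cores to $k$-bounded partitions with inverse $c$; $\lambda^{\omega_k}=p(c(\lambda)')$. For $k$-bounded $\mu\subseteq\lambda$, $\lambda/\mu$ is a horizontal $k$-strip if no two of its cells share a column, and $\mu^{\omega_k}\subseteq\lambda^{\omega_k}$ with no two cells of $\lambda^{\omega_k}/\mu^{\omega_k}$ in the same row. The $k$-Schur functions $\{s^{(k)}_\lambda\}$ are the basis of $\mathsf{Sym}_{(k)}$ with $s^{(k)}_\emptyset=1$ and $h_i s^{(k)}_\lambda=\sum_\mu s^{(k)}_\mu$ ($1\le i\le k$) over $\mu$ with $\mu/\lambda$ a horizontal $k$-strip of size $i$; the dual $k$-Schur functions $\{\mathfrak{S}^{(k)}_\lambda\}$ form the dual basis of $\mathsf{Sym}^{(k)}$. Box-adding operators: $t_1(\alpha)=[1,\alpha_1,\dots,\alpha_m]$; for $i\ge2$, $t_i(\alpha)$ replaces the leftmost part equal to $i-1$ by $i$ (undefined if none). $\beta//\alpha$ is a horizontal composition strip of size $n$ if $\beta=t_{i_n}\cdots t_{i_1}(\alpha)$ with $1\le i_1<\cdots<i_n$; for $k$-bounded $\alpha,\beta$ it is a horizontal $k$-composition strip if moreover $\lambda(\beta)/\lambda(\alpha)$ is a horizontal $k$-strip. $\{\mathbf{S}^{(k)}_\alpha\}$ is the unique basis of $\mathsf{NSym}_{(k)}$ with $\mathbf{S}^{(k)}_\emptyset=1$ and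 $H_i\mathbf{S}^{(k)}_\alpha=\sum_\beta\mathbf{S}^{(k)}_\beta$ ($1\le i\le k$) over $\beta$ with $\beta//\alpha$ a horizontal $k$-composition strip of size $i$; the quasi-symmetric affine Schur functions $\{\mathcal{S}^{(k)}_\alpha\}$ form the dual basis of $\mathsf{QSym}^{(k)}$. *)

theory Defs
  imports Complex_Main
begin

definition is_partition :: "nat list \<Rightarrow> bool" where
  "is_partition la \<longleftrightarrow> sorted_wrt (\<ge>) la \<and> 0 \<notin> set la"

definition kcomp :: "nat \<Rightarrow> nat list \<Rightarrow> bool" where
  "kcomp k \<alpha> \<longleftrightarrow> set \<alpha> \<subseteq> {1..k}"

definition kbpart :: "nat \<Rightarrow> nat list \<Rightarrow> bool" where
  "kbpart k la \<longleftrightarrow> is_partition la \<and> set la \<subseteq> {1..k}"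

definition lam :: "nat list \<Rightarrow> nat list" where
  "lam \<alpha> = rev (sort \<alpha>)"

definition pt :: "nat list \<Rightarrow> nat \<Rightarrow> nat" where
  "pt \<kappa> i = (if i < length \<kappa> then \<kappa> ! i else 0)"

definition conj :: "nat list \<Rightarrow> nat list" where
  "conj \<kappa> = map (\<lambda>j. card {i. i < length \<kappa> \<and> j < \<kappa> ! i}) [0..<pt \<kappa> 0]"

text \<open>hook length of cell (i,j), 0-indexed: kappa_i - j + kappa'_j - i - 1
  (equal to the 1-indexed formula kappa_i - j + kappa'_j - i + 1)\<close>
definition hook :: "nat list \<Rightarrow> nat \<Rightarrow> nat \<Rightarrow> nat" where
  "hook \<kappa> i j = (pt \<kappa> i - j) + (pt (conj \<kappa>) j - i) - 1"

definition is_core :: "nat \<Rightarrow> nat list \<Rightarrow> bool" where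
  "is_core r \<kappa> \<longleftrightarrow> is_partition \<kappa> \<and>
     (\<forall>i j. i < length \<kappa> \<and> j < \<kappa> ! i \<longrightarrow> hook \<kappa> i j \<noteq> r)"

definition pmap :: "nat \<Rightarrow> nat list \<Rightarrow> nat list" where
  "pmap k \<kappa> = filter (\<lambda>x. 0 < x)
     (map (\<lambda>i. card {j. j < \<kappa> ! i \<and> hook \<kappa> i j \<le> k}) [0..<length \<kappa>])"

definition cmap :: "nat \<Rightarrow> nat list \<Rightarrow> nat list" where
  "cmap k la = (THE \<kappa>. is_core (k + 1) \<kappa> \<and> pmap k \<kappa> = la)"

definition kconj :: "nat \<Rightarrow> nat list \<Rightarrow> nat list" where
  "kconj k la = pmap k (conj (cmap k la))"

definition contained :: "nat list \<Rightarrow> nat list \<Rightarrow> bool" where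
  "contained \<mu> la \<longleftrightarrow> (\<forall>i. pt \<mu> i \<le> pt la i)"

definition hkstrip :: "nat \<Rightarrow> nat list \<Rightarrow> nat list \<Rightarrow> bool" where
  "hkstrip k \<mu> la \<longleftrightarrow> kbpart k \<mu> \<and> kbpart k la \<and> contained \<mu> la \<and>
     (\<forall>i. pt la (Suc i) \<le> pt \<mu> i) \<and>
     contained (kconj k \<mu>) (kconj k la) \<and>
     (\<forall>i. pt (kconj k la) i \<le> pt (kconj k \<mu>) i + 1)"

fun repl_first :: "nat \<Rightarrow> nat \<Rightarrow> nat list \<Rightarrow> nat list option" where
  "repl_first a b [] = None"
| "repl_first a b (x # xs) = (if x = a then Some (b # xs)
      else map_option (\<lambda>ys. x # ys) (repl_first a b xs))"

definition tbox :: "nat \<Rightarrow> nat list \<Rightarrow> nat list option" where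
  "tbox i \<alpha> = (if i = 0 then None else if i = 1 then Some (1 # \<alpha>)
               else repl_first (i - 1) i \<alpha>)"

fun tapply :: "nat list \<Rightarrow> nat list \<Rightarrow> nat list option" where
  "tapply [] \<alpha> = Some \<alpha>"
| "tapply (i # is) \<alpha> = Option.bind (tbox i \<alpha>) (tapply is)"

definition hcstrip :: "nat list \<Rightarrow> nat list \<Rightarrow> nat \<Rightarrow> bool" where
  "hcstrip \<alpha> \<beta> n \<longleftrightarrow> (\<exists>is. length is = n \<and> sorted_wrt (<) is \<and> (\<forall>i\<in>set is. 1 \<le> i)
       \<and> tapply is \<alpha> = Some \<beta>)"

definition hkcstrip :: "nat \<Rightarrow> nat list \<Rightarrow> nat list \<Rightarrow> nat \<Rightarrow> bool" where
  "hkcstrip k \<alpha> \<beta> n \<longleftrightarrow> kcomp k \<alpha> \<and> kcomp k \<beta> \<and> hcstrip \<alpha> \<beta> n \<and>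
     hkstrip k (lam \<alpha>) (lam \<beta>)"

definition fsupp :: "('a \<Rightarrow> rat) \<Rightarrow> 'a set" where
  "fsupp f = {x. f x \<noteq> 0}"

definition fspace :: "'a set \<Rightarrow> ('a \<Rightarrow> rat) set" where
  "fspace I = {f. finite (fsupp f) \<and> fsupp f \<subseteq> I}"

definition lincomb :: "('i \<Rightarrow> 'a \<Rightarrow> rat) \<Rightarrow> ('i \<Rightarrow> rat) \<Rightarrow> 'a \<Rightarrow> rat" where
  "lincomb b c x = (\<Sum>i\<in>fsupp c. c i * b i x)"

definition is_basis :: "'i set \<Rightarrow> ('i \<Rightarrow> 'a \<Rightarrow> rat) \<Rightarrow> ('a \<Rightarrow> rat) set \<Rightarrow> bool" where
  "is_basis I b V \<longleftrightarrow> (\<forall>i\<in>I. b i \<in> V) \<and>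
     (\<forall>f\<in>V. \<exists>c\<in>fspace I. f = lincomb b c) \<and>
     (\<forall>c\<in>fspace I. lincomb b c = (\<lambda>_. 0) \<longrightarrow> c = (\<lambda>_. 0))"

text \<open>pairing <f,g> of coordinate vectors in dual bases (m/h, resp. M/H)\<close>
definition pair :: "('a \<Rightarrow> rat) \<Rightarrow> ('a \<Rightarrow> rat) \<Rightarrow> rat" where
  "pair f g = (\<Sum>x\<in>fsupp f. f x * g x)"

definition is_dual_basis :: "'a set \<Rightarrow> ('a \<Rightarrow> 'a \<Rightarrow> rat) \<Rightarrow> ('a \<Rightarrow> 'a \<Rightarrow> rat) \<Rightarrow> bool" where
  "is_dual_basis I b d \<longleftrightarrow> (\<forall>i\<in>I. d i \<in> fspace I \<and>
     (\<forall>j\<in>I. pair (d i) (b j) = (if i = j then 1 else 0)))"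

text \<open>unit: coordinate vector of 1 = h_empty (resp. H_empty)\<close>
definition one_vec :: "nat list \<Rightarrow> rat" where
  "one_vec x = (if x = [] then 1 else 0)"

text \<open>Sym_(k) = Q[h_1..h_k]; element = coordinates w.r.t. h_mu, mu k-bounded partition.
  Multiplication by h_i: h_i h_nu = h_{lam(i # nu)}.\<close>
definition sym_hmul :: "nat \<Rightarrow> (nat list \<Rightarrow> rat) \<Rightarrow> nat list \<Rightarrow> rat" where
  "sym_hmul i f \<mu> = (\<Sum>\<nu>\<in>{\<nu>. f \<nu> \<noteq> 0 \<and> lam (i # \<nu>) = \<mu>}. f \<nu>)"

text \<open>NSym_(k); element = coordinates w.r.t. H_beta, beta k-bounded composition.
  Left multiplication by H_i: H_i H_beta = H_{i # beta}.\<close>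
definition nsym_hmul :: "nat \<Rightarrow> (nat list \<Rightarrow> rat) \<Rightarrow> nat list \<Rightarrow> rat" where
  "nsym_hmul i F \<gamma> = (case \<gamma> of [] \<Rightarrow> 0 | j # \<beta> \<Rightarrow> if j = i then F \<beta> else 0)"

definition is_kschur :: "nat \<Rightarrow> (nat list \<Rightarrow> nat list \<Rightarrow> rat) \<Rightarrow> bool" where
  "is_kschur k s \<longleftrightarrow> is_basis {la. kbpart k la} s (fspace {la. kbpart k la}) \<and>
     s [] = one_vec \<and>
     (\<forall>i\<in>{1..k}. \<forall>la. kbpart k la \<longrightarrow>
        sym_hmul i (s la) =
        (\<lambda>\<nu>. \<Sum>\<mu>\<in>{\<mu>. hkstrip k la \<mu> \<and> sum_list \<mu> = sum_list la + i}. s \<mu> \<nu>))"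

definition is_ncschur :: "nat \<Rightarrow> (nat list \<Rightarrow> nat list \<Rightarrow> rat) \<Rightarrow> bool" where
  "is_ncschur k S \<longleftrightarrow> is_basis {\<alpha>. kcomp k \<alpha>} S (fspace {\<alpha>. kcomp k \<alpha>}) \<and>
     S [] = one_vec \<and>
     (\<forall>i\<in>{1..k}. \<forall>\<alpha>. kcomp k \<alpha> \<longrightarrow>
        nsym_hmul i (S \<alpha>) =
        (\<lambda>\<gamma>. \<Sum>\<beta>\<in>{\<beta>. hkcstrip k \<alpha> \<beta> i}. S \<beta> \<gamma>))"

text \<open>Sym^(k) element in m-coordinates (k-bounded partitions) mapped to QSym^(k)
  in M-coordinates (k-bounded compositions): m_mu maps to the sum of M_alpha, lam alpha = mu.\<close>
definition sym_to_qsym :: "nat \<Rightarrow> (nat list \<Rightarrow> rat) \<Rightarrow> nat list \<Rightarrow> rat" where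
  "sym_to_qsym k f \<gamma> = (if kcomp k \<gamma> then f (lam \<gamma>) else 0)"

end

theory Submission
  imports Defs "HOL-Library.Multiset"
begin

text \<open>
  Let \<open>\<chi>\<close>: NSym_(k) \<rightarrow> Sym_(k), \<open>H\<^sub>\<alpha> \<mapsto> h\<^sub>\<lambda>\<^sub>(\<^sub>\<alpha>\<^sub>)\<close>, be the commutative image; it is adjoint
  to the map Sym^(k) \<rightarrow> QSym^(k), so the theorem amounts to \<open>\<chi>(S\<^sub>\<alpha>) = s\<^sub>\<lambda>\<^sub>(\<^sub>\<alpha>\<^sub>)\<close>.
  Applying \<open>t\<^sub>i\<^sub>1, \<dots>, t\<^sub>i\<^sub>n\<close> with \<open>i\<^sub>1 < \<dots> < i\<^sub>n\<close> raises the number of parts \<open>\<ge> i\<^sub>j\<close> by one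
  for each \<open>j\<close> and leaves all other such counts unchanged, while a horizontal \<open>k\<close>-strip raises
  each count by at most one. Hence sorting is a bijection from the horizontal \<open>k\<close>-composition
  strips over \<open>\<alpha>\<close> onto the horizontal \<open>k\<close>-strips over \<open>\<lambda>(\<alpha>)\<close> of the same size, and the
  linear map \<open>\<sigma>: S\<^sub>\<alpha> \<mapsto> s\<^sub>\<lambda>\<^sub>(\<^sub>\<alpha>\<^sub>)\<close> intertwines left multiplication by \<open>H\<^sub>i\<close> with
  multiplication by \<open>h\<^sub>i\<close>, just as \<open>\<chi>\<close> does. Both send \<open>1\<close> to \<open>1\<close>, so they agree on every
  \<open>H\<^sub>\<alpha>\<close>, i.e. \<open>\<chi> = \<sigma>\<close>.
\<close>

definition parts_ge :: "nat \<Rightarrow> nat list \<Rightarrow> nat" where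
  "parts_ge x xs = length (filter (\<lambda>y. x \<le> y) xs)"

lemma parts_ge_Nil [simp]: "parts_ge x [] = 0"
  by (simp add: parts_ge_def)

lemma parts_ge_Cons [simp]:
  "parts_ge x (y # ys) = (if x \<le> y then Suc (parts_ge x ys) else parts_ge x ys)"
  by (simp add: parts_ge_def)

lemma parts_ge_mset_eq: "mset xs = mset ys \<Longrightarrow> parts_ge x xs = parts_ge x ys"
  unfolding parts_ge_def by (metis mset_filter size_mset)

lemma parts_ge_antimono: "x \<le> y \<Longrightarrow> parts_ge y xs \<le> parts_ge x xs"
  by (induction xs) auto

lemma count_mset_eq_parts_ge_diff: "count (mset xs) x = parts_ge x xs - parts_ge (Suc x) xs"
proof (induction xs)
  case (Cons y ys)
  have "parts_ge (Suc x) ys \<le> parts_ge x ys" by (rule parts_ge_antimono) simp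
  with Cons show ?case by auto
qed simp

lemma mset_eq_if_parts_ge_eq:
  assumes "0 \<notin> set xs" "0 \<notin> set ys" "\<forall>x\<ge>1. parts_ge x xs = parts_ge x ys"
  shows "mset xs = mset ys"
proof (rule multiset_eqI)
  fix x
  show "count (mset xs) x = count (mset ys) x"
  proof (cases "x = 0")
    case True
    then show ?thesis using assms(1,2) by (metis count_eq_zero_iff set_mset_mset)
  next
    case False
    then show ?thesis using assms(3) by (simp add: count_mset_eq_parts_ge_diff)
  qed
qed

lemma parts_ge_eq_card_pt: "1 \<le> x \<Longrightarrow> parts_ge x r = card {j. x \<le> pt r j}"
proof -
  assume "1 \<le> x"
  then have "{j. x \<le> pt r j} = {i. i < length r \<and> x \<le> r ! i}"
    by (auto simp: pt_def split: if_splits)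
  then show ?thesis by (simp add: parts_ge_def length_filter_conv_card)
qed

lemma mset_lam [simp]: "mset (lam xs) = mset xs"
  by (simp add: lam_def)

lemma length_lam: "length (lam xs) = length xs"
  by (simp add: lam_def)

lemma sum_list_lam: "sum_list (lam xs) = sum_list xs"
  by (metis mset_lam sum_mset_sum_list)

lemma parts_ge_lam: "parts_ge x (lam xs) = parts_ge x xs"
  by (rule parts_ge_mset_eq) simp

lemma lam_eq_if_mset_eq: "mset xs = mset ys \<Longrightarrow> lam xs = lam ys"
  unfolding lam_def by (metis properties_for_sort mset_sort sorted_sort)

lemma lam_Cons_lam: "lam (i # lam g) = lam (i # g)"
  by (rule lam_eq_if_mset_eq) simp

lemma lam_partition: "is_partition mu \<Longrightarrow> lam mu = mu"
proof -
  assume "is_partition mu"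
  then have "sorted (rev mu)" unfolding is_partition_def sorted_wrt_rev by simp
  then have "sort mu = rev mu" by (intro properties_for_sort) simp_all
  then show ?thesis by (simp add: lam_def)
qed

lemma kbpart_lam: "kcomp k a \<Longrightarrow> kbpart k (lam a)"
  unfolding kbpart_def is_partition_def kcomp_def lam_def
  by (auto simp: sorted_wrt_rev)

section \<open>Box-adding operators\<close>

lemma repl_first_Suc_Some:
  "repl_first a (Suc a) xs = Some ys \<Longrightarrow>
    (\<forall>y. parts_ge y ys = parts_ge y xs + (if y = Suc a then 1 else 0)) \<and>
    sum_list ys = Suc (sum_list xs) \<and> length ys = length xs \<and> set ys \<subseteq> insert (Suc a) (set xs)"
proof (induction xs arbitrary: ys)
  case (Cons x xs)
  show ?case
  proof (cases "x = a")
    case False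
    then obtain zs where "repl_first a (Suc a) xs = Some zs" "ys = x # zs"
      using Cons.prems by auto
    with Cons.IH show ?thesis by auto
  qed (use Cons.prems in auto)
qed simp

lemma repl_first_exists: "a \<in> set xs \<Longrightarrow> \<exists>ys. repl_first a b xs = Some ys"
  by (induction xs) auto

lemma tbox_Some:
  assumes "1 \<le> x" "tbox x a = Some b"
  shows "(\<forall>y\<ge>1. parts_ge y b = parts_ge y a + (if y = x then 1 else 0)) \<and>
    sum_list b = Suc (sum_list a) \<and> length b \<le> Suc (length a) \<and> set b \<subseteq> insert x (set a)"
proof (cases "x = 1")
  case False
  then obtain c where x: "x = Suc c" "repl_first c (Suc c) a = Some b"
    using assms by (cases x) (auto simp: tbox_def)
  show ?thesis using repl_first_Suc_Some[OF x(2)] unfolding x(1) by auto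
qed (use assms in \<open>auto simp: tbox_def\<close>)

lemma tapply_Some:
  "sorted_wrt (<) ps \<Longrightarrow> \<forall>x\<in>set ps. 1 \<le> x \<Longrightarrow> tapply ps a = Some b \<Longrightarrow>
    (\<forall>y\<ge>1. parts_ge y b = parts_ge y a + (if y \<in> set ps then 1 else 0)) \<and>
    sum_list b = sum_list a + length ps \<and> length b \<le> length a + length ps \<and> set b \<subseteq> set a \<union> set ps"
proof (induction ps arbitrary: a)
  case (Cons x ps)
  from Cons.prems(3) obtain a' where a': "tbox x a = Some a'" "tapply ps a' = Some b"
    by (cases "tbox x a") auto
  have "x \<notin> set ps" using Cons.prems(1) by auto
  then show ?case
    using tbox_Some[OF _ a'(1)] Cons.IH[OF _ _ a'(2)] Cons.prems(1,2) by auto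
qed simp

text \<open>\<open>t\<^sub>x\<close> is defined when there is a part \<open>x - 1\<close>, i.e. when there are more parts \<open>\<ge> x - 1\<close>
  than parts \<open>\<ge> x\<close>; the earlier operator \<open>t\<^sub>x\<^sub>-\<^sub>1\<close>, if applied, created one more part \<open>\<ge> x - 1\<close>.\<close>

lemma tapply_exists:
  "sorted_wrt (<) ps \<Longrightarrow> \<forall>x\<in>set ps. 1 \<le> x \<Longrightarrow> 0 \<notin> set a \<Longrightarrow>
   \<forall>x\<in>set ps. 2 \<le> x \<longrightarrow>
     parts_ge x a < parts_ge (x - 1) a + (if x - 1 \<in> set ps then 1 else 0) \<Longrightarrow>
   \<exists>b. tapply ps a = Some b"
proof (induction ps arbitrary: a)
  case (Cons x ps)
  have x1: "1 \<le> x" and gt: "\<forall>z\<in>set ps. x < z" using Cons.prems(1,2) by auto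
  have "\<exists>a'. tbox x a = Some a'"
  proof (cases "x = 1")
    case False
    then have "x - 1 \<notin> set (x # ps)" using gt x1 by auto
    then have "parts_ge x a < parts_ge (x - 1) a" using Cons.prems(4) False x1 by auto
    moreover have "count (mset a) (x - 1) = parts_ge (x - 1) a - parts_ge x a"
      using count_mset_eq_parts_ge_diff[of a "x - 1"] x1 by simp
    ultimately have "x - 1 \<in> set a" by (metis count_greater_zero_iff set_mset_mset zero_less_diff)
    then show ?thesis using False x1 by (auto simp: tbox_def intro: repl_first_exists)
  qed (simp add: tbox_def)
  then obtain a' where a': "tbox x a = Some a'" by blast
  have cnt: "\<forall>y\<ge>1. parts_ge y a' = parts_ge y a + (if y = x then 1 else 0)"
    and set: "set a' \<subseteq> insert x (set a)"
    using tbox_Some[OF x1 a'] by auto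
  have "\<exists>b. tapply ps a' = Some b"
  proof (rule Cons.IH)
    show "\<forall>z\<in>set ps. 2 \<le> z \<longrightarrow>
      parts_ge z a' < parts_ge (z - 1) a' + (if z - 1 \<in> set ps then 1 else 0)"
    proof (intro ballI impI)
      fix z assume z: "z \<in> set ps" "2 \<le> z"
      have "parts_ge z a < parts_ge (z - 1) a + (if z - 1 \<in> set (x # ps) then 1 else 0)"
        using Cons.prems(4) z by auto
      moreover have "z \<noteq> x" "z - 1 = x \<longrightarrow> z - 1 \<notin> set ps" using gt z(1) by auto
      ultimately show "parts_ge z a' < parts_ge (z - 1) a' + (if z - 1 \<in> set ps then 1 else 0)"
        using cnt[rule_format, of z] cnt[rule_format, of "z - 1"] z(2) by auto
    qed
  qed (use Cons.prems set x1 in auto)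
  then show ?case using a' by auto
qed simp

text \<open>The strip applies \<open>t\<^sub>x\<close> for exactly those \<open>x\<close> whose count of parts \<open>\<ge> x\<close> is raised.\<close>

lemma tapply_realises_interlacing:
  assumes a0: "0 \<notin> set a" and m0: "0 \<notin> set m"
    and interlace: "\<And>x. 1 \<le> x \<Longrightarrow> parts_ge x a \<le> parts_ge x m \<and> parts_ge x m \<le> Suc (parts_ge x a)"
  obtains ps b where "sorted_wrt (<) ps" "\<forall>x\<in>set ps. 1 \<le> x" "tapply ps a = Some b"
    "mset b = mset m"
proof -
  define I where "I = {x. 1 \<le> x \<and> parts_ge x m = Suc (parts_ge x a)}"
  have "I \<subseteq> {1..sum_list m}"
  proof
    fix x assume "x \<in> I"
    then have "1 \<le> x" "filter (\<lambda>y. x \<le> y) m \<noteq> []" unfolding I_def parts_ge_def by auto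
    then obtain y where "y \<in> set m" "1 \<le> x" "x \<le> y" by (auto simp: filter_empty_conv)
    then show "x \<in> {1..sum_list m}" using member_le_sum_list[of y m] by auto
  qed
  then have "finite I" by (rule finite_subset) simp
  define ps where "ps = sorted_list_of_set I"
  have ps: "sorted_wrt (<) ps" "set ps = I" "\<forall>x\<in>set ps. 1 \<le> x"
    using \<open>finite I\<close> unfolding ps_def I_def by auto
  have cnt_m: "parts_ge y m = parts_ge y a + (if y \<in> I then 1 else 0)" if "1 \<le> y" for y
    using interlace[OF that] that unfolding I_def by auto
  have "\<exists>b. tapply ps a = Some b"
  proof (rule tapply_exists[OF ps(1,3) a0], intro ballI impI)
    fix x assume x: "x \<in> set ps" "2 \<le> x"
    have "parts_ge x m \<le> parts_ge (x - 1) m" by (rule parts_ge_antimono) simp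
    moreover have "parts_ge x m = Suc (parts_ge x a)" using x(1) ps(2) unfolding I_def by simp
    moreover have "parts_ge (x - 1) m = parts_ge (x - 1) a + (if x - 1 \<in> set ps then 1 else 0)"
      using cnt_m[of "x - 1"] x(2) ps(2) by simp
    ultimately show "parts_ge x a < parts_ge (x - 1) a + (if x - 1 \<in> set ps then 1 else 0)"
      by linarith
  qed
  then obtain b where b: "tapply ps a = Some b" by blast
  have cnt_b: "\<forall>y\<ge>1. parts_ge y b = parts_ge y a + (if y \<in> set ps then 1 else 0)"
    and "set b \<subseteq> set a \<union> set ps"
    using tapply_Some[OF ps(1,3) b] by auto
  then have "0 \<notin> set b" using a0 ps(3) by auto
  moreover have "\<forall>y\<ge>1. parts_ge y b = parts_ge y m"
    using cnt_b cnt_m ps(2) by simp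
  ultimately have "mset b = mset m"
    using mset_eq_if_parts_ge_eq m0 by blast
  with ps b show ?thesis using that by blast
qed

section \<open>Sorting is a bijection between strips\<close>

lemma hkstrip_parts_ge_interlace:
  assumes "hkstrip k l m" "1 \<le> x"
  shows "parts_ge x l \<le> parts_ge x m \<and> parts_ge x m \<le> Suc (parts_ge x l)"
proof -
  let ?L = "{j. x \<le> pt l j}" and ?M = "{j. x \<le> pt m j}"
  have fin: "finite {j. x \<le> pt r j}" for r
    by (rule finite_subset[of _ "{..<length r}"]) (use assms(2) in \<open>auto simp: pt_def split: if_splits\<close>)
  have "\<forall>i. pt l i \<le> pt m i" "\<forall>i. pt m (Suc i) \<le> pt l i"
    using assms(1) unfolding hkstrip_def contained_def by auto
  then have "?L \<subseteq> ?M" "?M \<subseteq> insert 0 (Suc ` ?L)"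
    by (auto intro: order_trans) (metis (mono_tags) image_eqI mem_Collect_eq not0_implies_Suc order_trans)
  then have "card ?L \<le> card ?M" "card ?M \<le> card (insert 0 (Suc ` ?L))"
    by (auto intro: card_mono fin)
  moreover have "card (insert 0 (Suc ` ?L)) \<le> Suc (card ?L)"
    using card_insert_le_m1[of "Suc (card ?L)" "Suc ` ?L" 0] card_image_le[OF fin, of Suc] by simp
  ultimately have "card ?L \<le> card ?M \<and> card ?M \<le> Suc (card ?L)" by simp
  then show ?thesis using parts_ge_eq_card_pt[OF assms(2)] by simp
qed

lemma hkcstrip_sum_list_length:
  assumes "hkcstrip k a b i"
  shows "sum_list b = sum_list a + i" "length b \<le> length a + i"
proof -
  obtain ps where "length ps = i" "sorted_wrt (<) ps" "\<forall>x\<in>set ps. 1 \<le> x"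
    "tapply ps a = Some b"
    using assms unfolding hkcstrip_def hcstrip_def by blast
  then show "sum_list b = sum_list a + i" "length b \<le> length a + i"
    using tapply_Some by auto
qed

lemma finite_hkcstrip: "finite {b. hkcstrip k a b i}"
proof (rule finite_subset)
  show "{b. hkcstrip k a b i} \<subseteq> {xs. set xs \<subseteq> {1..k} \<and> length xs \<le> length a + i}"
  proof safe
    fix b assume b: "hkcstrip k a b i"
    then show "length b \<le> length a + i" by (rule hkcstrip_sum_list_length)
    show "x \<in> {1..k}" if "x \<in> set b" for x using b that by (auto simp: hkcstrip_def kcomp_def)
  qed
qed (rule finite_lists_length_le, simp)

lemma hkcstrip_lam_inj:
  assumes "hkcstrip k a b i" "hkcstrip k a b' i" "lam b = lam b'"
  shows "b = b'"
proof -
  obtain ps where ps: "sorted_wrt (<) ps" "\<forall>x\<in>set ps. 1 \<le> x" "tapply ps a = Some b"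
    using assms(1) unfolding hkcstrip_def hcstrip_def by blast
  obtain qs where qs: "sorted_wrt (<) qs" "\<forall>x\<in>set qs. 1 \<le> x" "tapply qs a = Some b'"
    using assms(2) unfolding hkcstrip_def hcstrip_def by blast
  have "mset b = mset b'" by (metis assms(3) mset_lam)
  then have "\<And>y. parts_ge y b = parts_ge y b'" by (rule parts_ge_mset_eq)
  moreover have "\<forall>y\<ge>1. parts_ge y b = parts_ge y a + (if y \<in> set ps then 1 else 0)"
    "\<forall>y\<ge>1. parts_ge y b' = parts_ge y a + (if y \<in> set qs then 1 else 0)"
    using tapply_Some[OF ps] tapply_Some[OF qs] by auto
  ultimately have incr_eq: "(if y \<in> set ps then 1 else 0) = (if y \<in> set qs then 1 else (0::nat))"
    if "1 \<le> y" for y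
    using that by simp
  have "y \<in> set ps \<longleftrightarrow> y \<in> set qs" if "1 \<le> y" for y
    using incr_eq[OF that] by (auto split: if_splits)
  then have "set ps = set qs" using ps(2) qs(2) by blast
  then have "ps = qs" using strict_sorted_equal[OF ps(1) qs(1)] by simp
  then show ?thesis using ps(3) qs(3) by simp
qed

lemma hkcstrip_lam_surj:
  assumes a: "kcomp k a" and h: "hkstrip k (lam a) m" and sm: "sum_list m = sum_list (lam a) + i"
  shows "\<exists>b. hkcstrip k a b i \<and> lam b = m"
proof -
  have km: "kbpart k m" using h unfolding hkstrip_def by simp
  have "0 \<notin> set a" "0 \<notin> set m" using a km unfolding kcomp_def kbpart_def by auto
  moreover have "parts_ge x a \<le> parts_ge x m \<and> parts_ge x m \<le> Suc (parts_ge x a)"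
    if "1 \<le> x" for x
    using hkstrip_parts_ge_interlace[OF h that] by (simp add: parts_ge_lam)
  ultimately obtain ps b where ps: "sorted_wrt (<) ps" "\<forall>x\<in>set ps. 1 \<le> x"
    and b: "tapply ps a = Some b" and bm: "mset b = mset m"
    by (rule tapply_realises_interlacing)
  have lb: "lam b = m"
    using lam_eq_if_mset_eq[OF bm] lam_partition km unfolding kbpart_def by simp
  have "length ps = i"
  proof -
    have "sum_list b = sum_list m" using bm by (metis sum_mset_sum_list)
    then show ?thesis using tapply_Some[OF ps b] sm by (simp add: sum_list_lam)
  qed
  moreover have "kcomp k b"
    using km mset_eq_setD[OF bm] unfolding kcomp_def kbpart_def by simp
  ultimately show ?thesis
    using a h lb ps b unfolding hkcstrip_def hcstrip_def by blast
qed

lemma bij_betw_lam_hkcstrip: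
  assumes "kcomp k a"
  shows "bij_betw lam {b. hkcstrip k a b i}
    {m. hkstrip k (lam a) m \<and> sum_list m = sum_list (lam a) + i}"
proof (rule bij_betw_imageI)
  show "inj_on lam {b. hkcstrip k a b i}"
    by (rule inj_onI) (auto intro: hkcstrip_lam_inj)
  show "lam ` {b. hkcstrip k a b i} = {m. hkstrip k (lam a) m \<and> sum_list m = sum_list (lam a) + i}"
  proof (intro equalityI subsetI)
    fix m assume "m \<in> lam ` {b. hkcstrip k a b i}"
    then obtain b where b: "hkcstrip k a b i" "m = lam b" by blast
    have "sum_list b = sum_list a + i" using b(1) by (rule hkcstrip_sum_list_length)
    with b show "m \<in> {m. hkstrip k (lam a) m \<and> sum_list m = sum_list (lam a) + i}"
      by (simp add: hkcstrip_def sum_list_lam)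
  qed (use hkcstrip_lam_surj[OF assms] in blast)
qed

definition unit_vec :: "'a \<Rightarrow> 'a \<Rightarrow> rat" where
  "unit_vec a = (\<lambda>x. if x = a then 1 else 0)"

definition indicator_vec :: "'a set \<Rightarrow> 'a \<Rightarrow> rat" where
  "indicator_vec S = (\<lambda>x. if x \<in> S then 1 else 0)"

lemma fsupp_unit_vec [simp]: "fsupp (unit_vec a) = {a}"
  by (auto simp: fsupp_def unit_vec_def)

lemma fsupp_indicator_vec [simp]: "fsupp (indicator_vec S) = S"
  by (auto simp: fsupp_def indicator_vec_def)

lemma unit_vec_in_fspace: "a \<in> I \<Longrightarrow> unit_vec a \<in> fspace I"
  by (simp add: fspace_def)

lemma indicator_vec_in_fspace: "finite S \<Longrightarrow> S \<subseteq> I \<Longrightarrow> indicator_vec S \<in> fspace I"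
  by (simp add: fspace_def)

lemma one_vec_eq_unit_vec: "one_vec = unit_vec []"
  by (rule ext) (simp add: one_vec_def unit_vec_def)

lemma sum_mult_if_eq:
  assumes "finite F" "\<And>x. x \<notin> F \<Longrightarrow> f x = 0"
  shows "(\<Sum>x\<in>F. f x * (if x = a then 1 else 0)) = (f a :: rat)"
proof -
  have "(\<Sum>x\<in>F. f x * (if x = a then 1 else 0)) = (\<Sum>x\<in>F. if x = a then f x else 0)"
    by (rule sum.cong) auto
  also have "\<dots> = f a" using assms by (simp add: sum.delta)
  finally show ?thesis .
qed

lemma fsupp_sum_subset: "fsupp (\<lambda>t. \<Sum>j\<in>J. c j * d j t) \<subseteq> (\<Union>j\<in>J. fsupp (d j))"
proof
  fix t assume "t \<in> fsupp (\<lambda>t. \<Sum>j\<in>J. c j * d j t)"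
  then obtain j where "j \<in> J" "c j * d j t \<noteq> 0"
    unfolding fsupp_def by (meson mem_Collect_eq sum.not_neutral_contains_not_neutral)
  then show "t \<in> (\<Union>j\<in>J. fsupp (d j))" by (auto simp: fsupp_def)
qed

lemma sum_in_fspace:
  assumes "finite J" "\<forall>j\<in>J. d j \<in> fspace I"
  shows "(\<lambda>t. \<Sum>j\<in>J. c j * d j t) \<in> fspace I"
  using fsupp_sum_subset[where J = J and c = c and d = d] assms unfolding fspace_def by (auto intro: finite_subset)

lemma sum_fsupp_eq_sum_superset:
  assumes "finite S" "fsupp c \<subseteq> S"
  shows "(\<Sum>i\<in>fsupp c. c i * f i) = (\<Sum>i\<in>S. c i * f i)"
  by (rule sum.mono_neutral_left) (use assms in \<open>auto simp: fsupp_def\<close>)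

lemma lincomb_eq_sum_superset:
  "finite S \<Longrightarrow> fsupp c \<subseteq> S \<Longrightarrow> lincomb b c x = (\<Sum>i\<in>S. c i * b i x)"
  unfolding lincomb_def by (rule sum_fsupp_eq_sum_superset)

lemma pair_eq_sum_superset:
  "finite S \<Longrightarrow> fsupp f \<subseteq> S \<Longrightarrow> pair f g = (\<Sum>x\<in>S. f x * g x)"
  unfolding pair_def by (rule sum_fsupp_eq_sum_superset)

lemma fsupp_lincomb_subset: "fsupp (lincomb b c) \<subseteq> (\<Union>i\<in>fsupp c. fsupp (b i))"
  unfolding lincomb_def[abs_def] by (rule fsupp_sum_subset)

lemma finite_fsupp_lincomb:
  "finite (fsupp c) \<Longrightarrow> \<forall>i\<in>fsupp c. finite (fsupp (b i)) \<Longrightarrow> finite (fsupp (lincomb b c))"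
  by (rule finite_subset[OF fsupp_lincomb_subset]) auto

lemma lincomb_in_fspace:
  "finite (fsupp c) \<Longrightarrow> \<forall>i\<in>fsupp c. b i \<in> fspace I \<Longrightarrow> lincomb b c \<in> fspace I"
  unfolding lincomb_def[abs_def] by (rule sum_in_fspace)

lemma lincomb_cong: "(\<And>i. i \<in> fsupp c \<Longrightarrow> b i = b' i) \<Longrightarrow> lincomb b c = lincomb b' c"
  unfolding lincomb_def by (rule ext) (rule sum.cong, auto)

lemma lincomb_unit_vec: "lincomb b (unit_vec a) = b a"
  unfolding lincomb_def fsupp_unit_vec by (simp add: unit_vec_def)

lemma lincomb_indicator_vec: "lincomb b (indicator_vec S) = (\<lambda>x. \<Sum>i\<in>S. b i x)"
  unfolding lincomb_def fsupp_indicator_vec by (simp add: indicator_vec_def)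

lemma lincomb_unit_vec_self: "finite (fsupp f) \<Longrightarrow> lincomb unit_vec f = f"
  unfolding lincomb_def unit_vec_def
  by (rule ext, subst eq_commute, rule sum_mult_if_eq) (auto simp: fsupp_def)

lemma lincomb_lincomb:
  assumes "finite (fsupp c)" "\<forall>j\<in>fsupp c. finite (fsupp (d j))"
  shows "lincomb b (\<lambda>t. \<Sum>j\<in>fsupp c. c j * d j t) = lincomb (\<lambda>j. lincomb b (d j)) c"
proof (rule ext)
  fix x
  let ?S = "\<Union>j\<in>fsupp c. fsupp (d j)"
  have fS: "finite ?S" using assms by auto
  have "lincomb b (\<lambda>t. \<Sum>j\<in>fsupp c. c j * d j t) x = (\<Sum>t\<in>?S. (\<Sum>j\<in>fsupp c. c j * d j t) * b t x)"
    by (rule lincomb_eq_sum_superset[OF fS fsupp_sum_subset])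
  also have "\<dots> = (\<Sum>j\<in>fsupp c. c j * (\<Sum>t\<in>?S. d j t * b t x))"
    by (simp add: sum_distrib_right sum_distrib_left mult.assoc sum.swap[of _ ?S])
  also have "\<dots> = (\<Sum>j\<in>fsupp c. c j * lincomb b (d j) x)"
    by (rule sum.cong[OF refl], subst lincomb_eq_sum_superset[OF fS]) auto
  finally show "lincomb b (\<lambda>t. \<Sum>j\<in>fsupp c. c j * d j t) x = lincomb (\<lambda>j. lincomb b (d j)) c x"
    by (simp add: lincomb_def)
qed

lemma pair_lincomb_right: "pair f (lincomb b c) = (\<Sum>i\<in>fsupp c. c i * pair f (b i))"
proof -
  have "pair f (lincomb b c) = (\<Sum>x\<in>fsupp f. \<Sum>i\<in>fsupp c. f x * (c i * b i x))"
    by (simp add: pair_def lincomb_def sum_distrib_left)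
  also have "\<dots> = (\<Sum>i\<in>fsupp c. \<Sum>x\<in>fsupp f. f x * (c i * b i x))"
    by (rule sum.swap)
  finally show ?thesis
    by (simp add: pair_def sum_distrib_left mult.left_commute)
qed

lemma pair_lincomb_left:
  assumes "finite (fsupp c)" "\<forall>i\<in>fsupp c. finite (fsupp (b i))"
  shows "pair (lincomb b c) g = (\<Sum>i\<in>fsupp c. c i * pair (b i) g)"
proof -
  let ?S = "\<Union>i\<in>fsupp c. fsupp (b i)"
  have fS: "finite ?S" using assms by auto
  have "pair (lincomb b c) g = (\<Sum>x\<in>?S. lincomb b c x * g x)"
    by (rule pair_eq_sum_superset[OF fS fsupp_lincomb_subset])
  also have "\<dots> = (\<Sum>i\<in>fsupp c. c i * (\<Sum>x\<in>?S. b i x * g x))"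
    by (simp add: lincomb_def sum_distrib_right sum_distrib_left mult.assoc sum.swap[of _ ?S])
  also have "\<dots> = (\<Sum>i\<in>fsupp c. c i * pair (b i) g)"
    by (rule sum.cong[OF refl], subst pair_eq_sum_superset[OF fS]) auto
  finally show ?thesis .
qed

lemma pair_unit_vec_right: "finite (fsupp f) \<Longrightarrow> pair f (unit_vec a) = f a"
  unfolding pair_def unit_vec_def by (rule sum_mult_if_eq) (auto simp: fsupp_def)

lemma pair_unit_vec_left: "pair (unit_vec a) g = g a"
  unfolding pair_def fsupp_unit_vec by (simp add: unit_vec_def)

definition coords :: "'a set \<Rightarrow> ('a \<Rightarrow> 'a \<Rightarrow> rat) \<Rightarrow> ('a \<Rightarrow> rat) \<Rightarrow> 'a \<Rightarrow> rat" where
  "coords I d F = (\<lambda>j. if j \<in> I then pair (d j) F else 0)"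

lemma coords_lincomb:
  assumes "is_dual_basis I b d" "c \<in> fspace I"
  shows "coords I d (lincomb b c) = c"
proof (rule ext)
  fix j
  have fc: "finite (fsupp c)" "fsupp c \<subseteq> I" using assms(2) by (auto simp: fspace_def)
  show "coords I d (lincomb b c) j = c j"
  proof (cases "j \<in> I")
    case True
    have "pair (d j) (lincomb b c) = (\<Sum>i\<in>fsupp c. c i * (if i = j then 1 else 0))"
      unfolding pair_lincomb_right
      using assms(1) True fc(2) unfolding is_dual_basis_def by (intro sum.cong) auto
    also have "\<dots> = c j" using fc(1) by (rule sum_mult_if_eq) (auto simp: fsupp_def)
    finally show ?thesis using True by (simp add: coords_def)
  qed (use fc(2) in \<open>auto simp: coords_def fsupp_def\<close>)
qed

lemma coords_in_fspace_and_repr: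
  assumes "is_basis I b (fspace I)" "is_dual_basis I b d" "F \<in> fspace I"
  shows "coords I d F \<in> fspace I \<and> F = lincomb b (coords I d F)"
proof -
  obtain c where "c \<in> fspace I" "F = lincomb b c"
    using assms(1,3) unfolding is_basis_def by blast
  then show ?thesis using coords_lincomb[OF assms(2)] by simp
qed

section \<open>The commutative image\<close>

text \<open>\<open>comm_image F \<mu>\<close> sums \<open>F \<gamma>\<close> over the compositions \<open>\<gamma>\<close> with \<open>lam \<gamma> = \<mu>\<close>, so it sends the
  coordinates of an element of \<open>NSym\<^sub>(\<^sub>k\<^sub>)\<close> in the \<open>H\<close>-basis to those of its commutative
  image in the \<open>h\<close>-basis.\<close>

definition comm_image :: "(nat list \<Rightarrow> rat) \<Rightarrow> nat list \<Rightarrow> rat" where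
  "comm_image F = (\<lambda>\<mu>. pair F (\<lambda>\<gamma>. unit_vec (lam \<gamma>) \<mu>))"

lemma comm_image_unit_vec: "comm_image (unit_vec \<gamma>) = unit_vec (lam \<gamma>)"
  by (rule ext) (simp add: comm_image_def pair_unit_vec_left)

lemma comm_image_lincomb:
  "finite (fsupp c) \<Longrightarrow> \<forall>i\<in>fsupp c. finite (fsupp (b i)) \<Longrightarrow>
    comm_image (lincomb b c) = lincomb (\<lambda>i. comm_image (b i)) c"
  by (rule ext) (simp add: comm_image_def pair_lincomb_left lincomb_def)

lemma sym_hmul_eq_pair:
  assumes "finite (fsupp f)"
  shows "sym_hmul i f = (\<lambda>\<mu>. pair f (\<lambda>\<nu>. unit_vec (lam (i # \<nu>)) \<mu>))"
proof (rule ext)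
  fix \<mu>
  have "{\<nu>. f \<nu> \<noteq> 0 \<and> lam (i # \<nu>) = \<mu>} = {\<nu> \<in> fsupp f. lam (i # \<nu>) = \<mu>}"
    by (auto simp: fsupp_def)
  then have "sym_hmul i f \<mu> = (\<Sum>\<nu>\<in>fsupp f. if lam (i # \<nu>) = \<mu> then f \<nu> else 0)"
    by (simp add: sym_hmul_def sum.inter_filter[OF assms])
  also have "\<dots> = pair f (\<lambda>\<nu>. unit_vec (lam (i # \<nu>)) \<mu>)"
    unfolding pair_def unit_vec_def by (rule sum.cong) auto
  finally show "sym_hmul i f \<mu> = pair f (\<lambda>\<nu>. unit_vec (lam (i # \<nu>)) \<mu>)" .
qed

lemma sym_hmul_unit_vec: "sym_hmul i (unit_vec \<nu>) = unit_vec (lam (i # \<nu>))"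
  by (simp add: sym_hmul_eq_pair pair_unit_vec_left)

lemma sym_hmul_lincomb:
  assumes "finite (fsupp c)" "\<forall>j\<in>fsupp c. finite (fsupp (b j))"
  shows "sym_hmul i (lincomb b c) = lincomb (\<lambda>j. sym_hmul i (b j)) c"
proof -
  have "sym_hmul i (lincomb b c) = (\<lambda>\<mu>. pair (lincomb b c) (\<lambda>\<nu>. unit_vec (lam (i # \<nu>)) \<mu>))"
    by (rule sym_hmul_eq_pair[OF finite_fsupp_lincomb[OF assms]])
  also have "\<dots> = lincomb (\<lambda>j. \<lambda>\<mu>. pair (b j) (\<lambda>\<nu>. unit_vec (lam (i # \<nu>)) \<mu>)) c"
    by (rule ext) (simp add: pair_lincomb_left[OF assms] lincomb_def)
  also have "\<dots> = lincomb (\<lambda>j. sym_hmul i (b j)) c"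
    by (rule lincomb_cong) (use assms(2) sym_hmul_eq_pair in auto)
  finally show ?thesis .
qed

lemma nsym_hmul_lincomb: "nsym_hmul i (lincomb b c) = lincomb (\<lambda>j. nsym_hmul i (b j)) c"
  by (rule ext) (simp add: nsym_hmul_def lincomb_def split: list.split)

lemma nsym_hmul_unit_vec: "nsym_hmul i (unit_vec \<gamma>) = unit_vec (i # \<gamma>)"
  by (rule ext) (simp add: nsym_hmul_def unit_vec_def split: list.split)

lemma comm_image_nsym_hmul:
  assumes "finite (fsupp F)"
  shows "comm_image (nsym_hmul i F) = sym_hmul i (comm_image F)"
proof -
  have F: "F = lincomb unit_vec F" using lincomb_unit_vec_self[OF assms] by simp
  have "comm_image (nsym_hmul i F) = comm_image (lincomb (\<lambda>\<gamma>. unit_vec (i # \<gamma>)) F)"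
    by (subst F) (simp add: nsym_hmul_lincomb nsym_hmul_unit_vec)
  also have "\<dots> = lincomb (\<lambda>\<gamma>. sym_hmul i (unit_vec (lam \<gamma>))) F"
    by (simp add: comm_image_lincomb assms comm_image_unit_vec sym_hmul_unit_vec lam_Cons_lam)
  also have "\<dots> = sym_hmul i (lincomb (\<lambda>\<gamma>. unit_vec (lam \<gamma>)) F)"
    by (rule sym_hmul_lincomb[symmetric]) (simp_all add: assms)
  also have "lincomb (\<lambda>\<gamma>. unit_vec (lam \<gamma>)) F = comm_image F"
    by (subst (2) F) (simp add: comm_image_lincomb assms comm_image_unit_vec)
  finally show ?thesis .
qed

section \<open>Commutative image of the noncommutative \<open>k\<close>-Schur functions\<close>

locale kschur_duality =
  fixes k :: nat and s dS NS QS :: "nat list \<Rightarrow> nat list \<Rightarrow> rat"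
  assumes kschur: "is_kschur k s"
    and dual_kschur: "is_dual_basis {la. kbpart k la} s dS"
    and ncschur: "is_ncschur k NS"
    and dual_ncschur: "is_dual_basis {\<alpha>. kcomp k \<alpha>} NS QS"
begin

lemma NS_basis: "is_basis {\<alpha>. kcomp k \<alpha>} NS (fspace {\<alpha>. kcomp k \<alpha>})"
  using ncschur unfolding is_ncschur_def by simp

lemma NS_in_fspace: "kcomp k \<alpha> \<Longrightarrow> NS \<alpha> \<in> fspace {\<alpha>. kcomp k \<alpha>}"
  using NS_basis unfolding is_basis_def by simp

lemma finite_fsupp_s: "kbpart k \<mu> \<Longrightarrow> finite (fsupp (s \<mu>))"
  using kschur unfolding is_kschur_def is_basis_def fspace_def by simp

lemma NS_pieri: "i \<in> {1..k} \<Longrightarrow> kcomp k \<alpha> \<Longrightarrow>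
    nsym_hmul i (NS \<alpha>) = lincomb NS (indicator_vec {\<beta>. hkcstrip k \<alpha> \<beta> i})"
  using ncschur unfolding is_ncschur_def lincomb_indicator_vec by blast

lemma s_pieri: "i \<in> {1..k} \<Longrightarrow> kbpart k la \<Longrightarrow>
    sym_hmul i (s la) = (\<lambda>\<nu>. \<Sum>\<mu>\<in>{\<mu>. hkstrip k la \<mu> \<and> sum_list \<mu> = sum_list la + i}. s \<mu> \<nu>)"
  using kschur unfolding is_kschur_def by blast

definition schur_image :: "(nat list \<Rightarrow> rat) \<Rightarrow> nat list \<Rightarrow> rat" where
  "schur_image F = lincomb (\<lambda>\<beta>. s (lam \<beta>)) (coords {\<alpha>. kcomp k \<alpha>} QS F)"

lemma schur_image_lincomb_NS:
  "c \<in> fspace {\<alpha>. kcomp k \<alpha>} \<Longrightarrow> schur_image (lincomb NS c) = lincomb (\<lambda>\<beta>. s (lam \<beta>)) c"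
  unfolding schur_image_def using coords_lincomb[OF dual_ncschur] by simp

lemma schur_image_NS: "kcomp k \<alpha> \<Longrightarrow> schur_image (NS \<alpha>) = s (lam \<alpha>)"
  using schur_image_lincomb_NS[OF unit_vec_in_fspace[of \<alpha>]] by (simp add: lincomb_unit_vec)

lemma schur_image_lincomb:
  assumes fc: "finite (fsupp c)" and b: "\<forall>j\<in>fsupp c. b j \<in> fspace {\<alpha>. kcomp k \<alpha>}"
  shows "schur_image (lincomb b c) = lincomb (\<lambda>j. schur_image (b j)) c"
proof -
  define cb where "cb j = coords {\<alpha>. kcomp k \<alpha>} QS (b j)" for j
  have cb: "cb j \<in> fspace {\<alpha>. kcomp k \<alpha>} \<and> b j = lincomb NS (cb j)" if "j \<in> fsupp c" for j
    using coords_in_fspace_and_repr[OF NS_basis dual_ncschur] b that unfolding cb_def by blast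
  have fin_cb: "\<forall>j\<in>fsupp c. finite (fsupp (cb j))" using cb unfolding fspace_def by blast
  have "lincomb b c = lincomb (\<lambda>j. lincomb NS (cb j)) c"
    by (rule lincomb_cong) (use cb in auto)
  also have "\<dots> = lincomb NS (\<lambda>t. \<Sum>j\<in>fsupp c. c j * cb j t)"
    by (rule lincomb_lincomb[symmetric, OF fc fin_cb])
  moreover have "(\<lambda>t. \<Sum>j\<in>fsupp c. c j * cb j t) \<in> fspace {\<alpha>. kcomp k \<alpha>}"
    by (rule sum_in_fspace[OF fc]) (use cb in auto)
  ultimately have "schur_image (lincomb b c)
      = lincomb (\<lambda>\<beta>. s (lam \<beta>)) (\<lambda>t. \<Sum>j\<in>fsupp c. c j * cb j t)"
    by (simp add: schur_image_lincomb_NS)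
  also have "\<dots> = lincomb (\<lambda>j. lincomb (\<lambda>\<beta>. s (lam \<beta>)) (cb j)) c"
    by (rule lincomb_lincomb[OF fc fin_cb])
  also have "\<dots> = lincomb (\<lambda>j. schur_image (b j)) c"
    by (rule lincomb_cong) (use cb schur_image_lincomb_NS in metis)
  finally show ?thesis .
qed

lemma schur_image_nsym_hmul:
  assumes F: "F \<in> fspace {\<alpha>. kcomp k \<alpha>}" and i: "i \<in> {1..k}"
  shows "schur_image (nsym_hmul i F) = sym_hmul i (schur_image F)"
proof -
  define c where "c = coords {\<alpha>. kcomp k \<alpha>} QS F"
  have c: "c \<in> fspace {\<alpha>. kcomp k \<alpha>}" "F = lincomb NS c"
    using coords_in_fspace_and_repr[OF NS_basis dual_ncschur F] unfolding c_def by auto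
  have fc: "finite (fsupp c)" "fsupp c \<subseteq> {\<alpha>. kcomp k \<alpha>}" using c(1) unfolding fspace_def by auto
  define strips where "strips \<alpha> = indicator_vec {\<beta>. hkcstrip k \<alpha> \<beta> i}" for \<alpha>
  have strips: "strips \<alpha> \<in> fspace {\<alpha>. kcomp k \<alpha>}" for \<alpha>
    unfolding strips_def by (rule indicator_vec_in_fspace[OF finite_hkcstrip]) (auto simp: hkcstrip_def)
  have NS_strips: "lincomb NS (strips \<alpha>) \<in> fspace {\<alpha>. kcomp k \<alpha>}" for \<alpha>
    by (rule lincomb_in_fspace) (use finite_hkcstrip in \<open>auto simp: strips_def hkcstrip_def NS_in_fspace\<close>)
  have "nsym_hmul i F = lincomb (\<lambda>\<alpha>. lincomb NS (strips \<alpha>)) c"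
    unfolding c(2) nsym_hmul_lincomb strips_def by (rule lincomb_cong) (use fc NS_pieri[OF i] in auto)
  then have "schur_image (nsym_hmul i F) = lincomb (\<lambda>\<alpha>. schur_image (lincomb NS (strips \<alpha>))) c"
    using schur_image_lincomb[OF fc(1)] NS_strips by simp
  also have "\<dots> = lincomb (\<lambda>\<alpha>. lincomb (\<lambda>\<beta>. s (lam \<beta>)) (strips \<alpha>)) c"
    by (simp add: schur_image_lincomb_NS[OF strips])
  also have "\<dots> = lincomb (\<lambda>\<alpha>. sym_hmul i (s (lam \<alpha>))) c"
  proof (rule lincomb_cong)
    fix \<alpha> assume "\<alpha> \<in> fsupp c"
    then have \<alpha>: "kcomp k \<alpha>" using fc(2) by auto
    show "lincomb (\<lambda>\<beta>. s (lam \<beta>)) (strips \<alpha>) = sym_hmul i (s (lam \<alpha>))"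
      unfolding strips_def lincomb_indicator_vec s_pieri[OF i kbpart_lam[OF \<alpha>]]
      using sum.reindex_bij_betw[OF bij_betw_lam_hkcstrip[OF \<alpha>], of "\<lambda>\<mu>. s \<mu> \<nu>" for \<nu>] by simp
  qed
  also have "\<dots> = sym_hmul i (schur_image F)"
    unfolding schur_image_def c_def[symmetric]
    by (rule sym_hmul_lincomb[symmetric, OF fc(1)]) (use fc(2) finite_fsupp_s kbpart_lam in auto)
  finally show ?thesis .
qed

lemma comm_image_eq_schur_image_unit_vec:
  "kcomp k \<gamma> \<Longrightarrow> comm_image (unit_vec \<gamma>) = schur_image (unit_vec \<gamma>)"
proof (induction \<gamma>)
  case Nil
  have "NS [] = unit_vec []" "s [] = unit_vec []"
    using ncschur kschur one_vec_eq_unit_vec unfolding is_ncschur_def is_kschur_def by auto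
  then show ?case using schur_image_NS[OF Nil] by (simp add: comm_image_unit_vec lam_def)
next
  case (Cons i \<gamma>)
  then have i: "i \<in> {1..k}" and \<gamma>: "kcomp k \<gamma>" unfolding kcomp_def by auto
  have "comm_image (unit_vec (i # \<gamma>)) = sym_hmul i (comm_image (unit_vec \<gamma>))"
    by (simp add: comm_image_nsym_hmul nsym_hmul_unit_vec[symmetric])
  also have "\<dots> = sym_hmul i (schur_image (unit_vec \<gamma>))"
    using Cons.IH[OF \<gamma>] by simp
  also have "\<dots> = schur_image (unit_vec (i # \<gamma>))"
    using schur_image_nsym_hmul[OF unit_vec_in_fspace i] \<gamma> by (simp add: nsym_hmul_unit_vec)
  finally show ?case .
qed

lemma sym_to_qsym_dual_kschur:
  assumes la: "kbpart k la"
  shows "sym_to_qsym k (dS la) = (\<lambda>\<gamma>. \<Sum>\<alpha>\<in>{\<alpha>. kcomp k \<alpha> \<and> lam \<alpha> = la}. QS \<alpha> \<gamma>)"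
proof (rule ext)
  fix \<gamma>
  let ?T = "{\<alpha>. kcomp k \<alpha> \<and> lam \<alpha> = la}"
  have QS_in_fspace: "QS \<alpha> \<in> fspace {\<alpha>. kcomp k \<alpha>}" if "kcomp k \<alpha>" for \<alpha>
    using dual_ncschur that unfolding is_dual_basis_def by simp
  show "sym_to_qsym k (dS la) \<gamma> = (\<Sum>\<alpha>\<in>?T. QS \<alpha> \<gamma>)"
  proof (cases "kcomp k \<gamma>")
    case False
    then have "QS \<alpha> \<gamma> = 0" if "\<alpha> \<in> ?T" for \<alpha>
      using QS_in_fspace[of \<alpha>] that unfolding fspace_def fsupp_def by auto
    then show ?thesis using False by (simp add: sym_to_qsym_def)
  next
    case True
    define c where "c = coords {\<alpha>. kcomp k \<alpha>} QS (unit_vec \<gamma>)"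
    have fc: "finite (fsupp c)" "fsupp c \<subseteq> {\<alpha>. kcomp k \<alpha>}"
      using coords_in_fspace_and_repr[OF NS_basis dual_ncschur unit_vec_in_fspace] True
      unfolding c_def fspace_def by auto
    have c: "c \<alpha> = QS \<alpha> \<gamma>" if "kcomp k \<alpha>" for \<alpha>
      using QS_in_fspace[OF that] that unfolding c_def coords_def fspace_def by (simp add: pair_unit_vec_right)
    have "finite ?T"
      by (rule finite_subset[of _ "{xs. set xs \<subseteq> {1..k} \<and> length xs = length la}"])
        (auto simp: kcomp_def length_lam intro: finite_lists_length_eq)
    have "finite (fsupp (dS la))"
      using dual_kschur la unfolding is_dual_basis_def fspace_def by simp
    then have "sym_to_qsym k (dS la) \<gamma> = pair (dS la) (comm_image (unit_vec \<gamma>))"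
      using True by (simp add: sym_to_qsym_def comm_image_unit_vec pair_unit_vec_right)
    also have "\<dots> = pair (dS la) (lincomb (\<lambda>\<beta>. s (lam \<beta>)) c)"
      using comm_image_eq_schur_image_unit_vec[OF True] by (simp add: schur_image_def c_def)
    also have "\<dots> = (\<Sum>\<beta>\<in>fsupp c. c \<beta> * (if la = lam \<beta> then 1 else 0))"
      unfolding pair_lincomb_right using dual_kschur la fc(2) kbpart_lam
      by (intro sum.cong) (auto simp: is_dual_basis_def)
    also have "\<dots> = (\<Sum>\<beta>\<in>fsupp c \<union> ?T. c \<beta> * (if la = lam \<beta> then 1 else 0))"
      by (rule sum_fsupp_eq_sum_superset) (use fc \<open>finite ?T\<close> in auto)
    also have "\<dots> = (\<Sum>\<beta>\<in>?T. c \<beta> * (if la = lam \<beta> then 1 else 0))"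
      by (rule sum.mono_neutral_right) (use fc \<open>finite ?T\<close> in auto)
    also have "\<dots> = (\<Sum>\<alpha>\<in>?T. QS \<alpha> \<gamma>)"
      by (rule sum.cong) (auto simp: c)
    finally show ?thesis .
  qed
qed

end

theorem mainTheorem8:
  fixes k :: nat
    and s dS :: "nat list \<Rightarrow> nat list \<Rightarrow> rat"
    and NS QS :: "nat list \<Rightarrow> nat list \<Rightarrow> rat"
  assumes "k \<ge> 1"
    and "is_kschur k s"
    and "is_dual_basis {la. kbpart k la} s dS"
    and "is_ncschur k NS"
    and "is_dual_basis {\<alpha>. kcomp k \<alpha>} NS QS"
    and "kbpart k la"
  shows "sym_to_qsym k (dS la) = (\<lambda>\<gamma>. \<Sum>\<alpha>\<in>{\<alpha>. kcomp k \<alpha> \<and> lam \<alpha> = la}. QS \<alpha> \<gamma>)"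
proof -
  interpret kschur_duality k s dS NS QS
    using assms(2-5) by unfold_locales
  show ?thesis using assms(6) by (rule sym_to_qsym_dual_kschur)
qed

end
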